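(* Assume the standing setting in the context, and assume that for every $\boldsymbol a\in\mathrm{Dom}(\boldsymbol A)$, $\Pr^+_\Omega(h(\boldsymbol x)\mid s_1,\boldsymbol a)\ge \Pr^+_\Omega(h(\boldsymbol x)\mid s_0,\boldsymbol a)$. Let $\boldsymbol U\subseteq \boldsymbol X\cup\{Y\}$ be any set of variables such that, under $\Omega$, $(\boldsymbol X\perp\!\!\!\perp C\mid S,\boldsymbol A,\boldsymbol U)$, and assume $\Omega(S=s,\boldsymbol A=\boldsymbol a,\boldsymbol U=\boldsymbol u, C=1)>0$ for all $s,\boldsymbol a,\boldsymbol u$. Then $$0\le \digamma(\Omega)\le \frac{1}{|\mathrm{Dom}(\boldsymbol A)|}\sum_{\boldsymbol a\in\mathrm{Dom}(\boldsymbol A)}\Big(\max_{\boldsymbol u\in\mathrm{Dom}(\boldsymbol U)}\Pr^+_\Delta(h(\boldsymbol x)\mid s_1,\boldsymbol a,\boldsymbol u)-\min_{\boldsymbol u\in\mathrm{Dom}(\boldsymbol U)}\Pr^+_\Delta(h(\boldsymbol x)\mid s_0,\boldsymbol a,\boldsymbol u)\Big).$$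
   Context: Standing setting. All variables have finite domains. $\boldsymbol X=(X_1,\dots,X_n)$ is a vector of features, $Y\in\{0,1\}$ is the label, and $C\in\{0,1\}$ is a selection indicator. $\Omega$ is a joint distribution of $(\boldsymbol X,Y,C)$; its marginal on $(\boldsymbol X,Y)$ is the target population. The biased distribution is $\Delta(\boldsymbol x,y)=\Omega(\boldsymbol x,y\mid C=1)$. A protected attribute $S$ is one of the features, with $\mathrm{Dom}(S)=\{s_0,s_1\}$. A set of admissible attributes $\boldsymbol A\subseteq \boldsymbol X\cup\{Y\}$ with $S\notin\boldsymbol A$ is fixed. A classifier is a function $h:\mathrm{Dom}(\boldsymbol X)\to\{0,1\}$. For a distribution $P$ and an event $E$, write $\Pr^+_P(h(\boldsymbol x)\mid E)=P(h(\boldsymbol X)=1\mid E)$; conditioning on $s,\boldsymbol a,\boldsymbol u$ means conditioning on $S=s,\boldsymbol A=\boldsymbol a,\boldsymbol U=\boldsymbol u$. The fairness query of $h$ on $P$ is $$\digamma(P)=\frac{1}{|\mathrm{Dom}(\boldsymbol A)|}\sum_{\boldsymbol a\in\mathrm{Dom}(\boldsymbol A)}\Big|\Pr^+_P(h(\boldsymbol x)\mid S=s_1,\boldsymbol A=\boldsymbol a)-\Pr^+_P(h(\boldsymbol x)\mid S=s_0,\boldsymbol A=\boldsymbol a)\Big|.$$ *)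

theory Defs
  imports Complex_Main "HOL-Library.FuncSet"
begin

(* Variables are indexed by a finite type 'v (the features X_1..X_n together with
   the label Y); D v :: nat set is the finite domain of variable v.
   A full assignment of (X,Y) is a map w :: 'v => nat in Pi\<^sub>E UNIV D.
   For a set of variables B, Dom(B) = Pi\<^sub>E B D, and "B = b" is "restrict w B = b". *)

(* joint distribution Omega of (X,Y,C): probability of an event on (w,c) *)
definition pj :: "('w \<Rightarrow> bool \<Rightarrow> real) \<Rightarrow> 'w set \<Rightarrow> ('w \<Rightarrow> bool \<Rightarrow> bool) \<Rightarrow> real" where
  "pj \<Omega> W E = (\<Sum>w\<in>W. \<Sum>c\<in>UNIV. if E w c then \<Omega> w c else 0)"

definition tgt :: "('w \<Rightarrow> bool \<Rightarrow> real) \<Rightarrow> 'w \<Rightarrow> real" where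
  "tgt \<Omega> w = \<Omega> w True + \<Omega> w False"

definition delta :: "('w \<Rightarrow> bool \<Rightarrow> real) \<Rightarrow> 'w set \<Rightarrow> 'w \<Rightarrow> real" where
  "delta \<Omega> W w = \<Omega> w True / pj \<Omega> W (\<lambda>w c. c)"

definition cprob :: "('w \<Rightarrow> real) \<Rightarrow> 'w set \<Rightarrow> ('w \<Rightarrow> bool) \<Rightarrow> ('w \<Rightarrow> bool) \<Rightarrow> real" where
  "cprob P W F E = (\<Sum>w\<in>W. if F w \<and> E w then P w else 0) / (\<Sum>w\<in>W. if E w then P w else 0)"

definition fq :: "(('v \<Rightarrow> nat) \<Rightarrow> real) \<Rightarrow> ('v \<Rightarrow> nat set) \<Rightarrow> (('v \<Rightarrow> nat) \<Rightarrow> bool)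
    \<Rightarrow> 'v \<Rightarrow> nat \<Rightarrow> nat \<Rightarrow> 'v set \<Rightarrow> real" where
  "fq P D hh Sv s0 s1 A =
     (1 / real (card (Pi\<^sub>E A D))) *
     (\<Sum>a\<in>Pi\<^sub>E A D.
        \<bar>cprob P (Pi\<^sub>E UNIV D) hh (\<lambda>w. w Sv = s1 \<and> restrict w A = a)
         - cprob P (Pi\<^sub>E UNIV D) hh (\<lambda>w. w Sv = s0 \<and> restrict w A = a)\<bar>)"

(* (X \<perp> C | S, A, U) under Omega, for all values of X, C, S, A, U,
   in the product form P(x,c,z) P(z) = P(x,z) P(c,z) *)
definition cond_indep_XC :: "(('v \<Rightarrow> nat) \<Rightarrow> bool \<Rightarrow> real) \<Rightarrow> ('v \<Rightarrow> nat set) \<Rightarrow> 'v set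
    \<Rightarrow> 'v \<Rightarrow> 'v set \<Rightarrow> 'v set \<Rightarrow> bool" where
  "cond_indep_XC \<Omega> D X Sv A U \<longleftrightarrow>
    (\<forall>x c s a u.
      let W = Pi\<^sub>E UNIV D;
          Z = (\<lambda>w. w Sv = s \<and> restrict w A = a \<and> restrict w U = u) in
      pj \<Omega> W (\<lambda>w c'. restrict w X = x \<and> c' = c \<and> Z w) * pj \<Omega> W (\<lambda>w c'. Z w)
      = pj \<Omega> W (\<lambda>w c'. restrict w X = x \<and> Z w) * pj \<Omega> W (\<lambda>w c'. c' = c \<and> Z w))"

end

theory Submission
  imports Defs
begin

text \<open>Conditional independence of the features and the selection given \<open>S, A, U\<close> makes
  \<open>\<Omega>\<close> and \<open>\<Delta>\<close> agree on \<open>Pr\<^sup>+(h | s, a, u)\<close>. Since \<open>Pr\<^sup>+\<^sub>\<Omega>(h | s, a)\<close> is a weighted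
  average of these strata over \<open>u\<close>, it lies between their minimum and maximum under \<open>\<Delta>\<close>.
  The assumed sign of \<open>Pr\<^sup>+\<^sub>\<Omega>(h | s\<^sub>1, a) - Pr\<^sup>+\<^sub>\<Omega>(h | s\<^sub>0, a)\<close> then bounds each summand of
  the fairness query by the stratum maximum for \<open>s\<^sub>1\<close> minus the stratum minimum for \<open>s\<^sub>0\<close>.\<close>

lemma pj_cong:
  assumes "\<forall>w\<in>W. \<forall>c. E w c = E' w c"
  shows "pj \<Omega> W E = pj \<Omega> W E'"
  unfolding pj_def using assms by (intro sum.cong refl) auto

lemma pj_mono:
  assumes "\<forall>w c. 0 \<le> \<Omega> w c" and "\<forall>w c. E w c \<longrightarrow> E' w c"
  shows "pj \<Omega> W E \<le> pj \<Omega> W E'"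
  unfolding pj_def using assms by (intro sum_mono) auto

lemma sum_pj_eq_pj_mem:
  assumes "finite S"
  shows "(\<Sum>x\<in>S. pj \<Omega> W (\<lambda>w c. g w = x \<and> P w c)) = pj \<Omega> W (\<lambda>w c. g w \<in> S \<and> P w c)"
proof -
  have "(\<Sum>x\<in>S. pj \<Omega> W (\<lambda>w c. g w = x \<and> P w c))
     = (\<Sum>w\<in>W. \<Sum>c\<in>UNIV. \<Sum>x\<in>S. if g w = x \<and> P w c then \<Omega> w c else 0)"
    unfolding pj_def by (subst sum.swap) (intro sum.cong refl sum.swap)
  also have "\<dots> = pj \<Omega> W (\<lambda>w c. g w \<in> S \<and> P w c)"
    unfolding pj_def
  proof (intro sum.cong refl)
    show "(\<Sum>x\<in>S. if g w = x \<and> P w c then \<Omega> w c else 0) = (if g w \<in> S \<and> P w c then \<Omega> w c else 0)"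
      for w c using assms by (cases "P w c") (simp_all add: sum.delta)
  qed
  finally show ?thesis .
qed

lemma pj_eq_sum_strata:
  assumes "finite S" and "\<forall>w\<in>W. g w \<in> S"
  shows "pj \<Omega> W (\<lambda>w c. E w c) = (\<Sum>x\<in>S. pj \<Omega> W (\<lambda>w c. E w c \<and> g w = x))"
proof -
  have "pj \<Omega> W (\<lambda>w c. E w c) = pj \<Omega> W (\<lambda>w c. g w \<in> S \<and> E w c)"
    using assms(2) by (intro pj_cong) auto
  also have "\<dots> = (\<Sum>x\<in>S. pj \<Omega> W (\<lambda>w c. g w = x \<and> E w c))"
    by (rule sum_pj_eq_pj_mem[OF assms(1), symmetric])
  finally show ?thesis by (simp add: conj_commute)
qed

lemma cprob_tgt:
  "cprob (tgt \<Omega>) W F E = pj \<Omega> W (\<lambda>w c. F w \<and> E w) / pj \<Omega> W (\<lambda>w c. E w)"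
proof -
  have "(\<Sum>w\<in>W. \<Sum>c\<in>UNIV. if G w then \<Omega> w c else 0) = (\<Sum>w\<in>W. if G w then tgt \<Omega> w else 0)"
    for G :: "'a \<Rightarrow> bool"
    unfolding tgt_def by (intro sum.cong refl) (simp add: UNIV_bool)
  then show ?thesis unfolding cprob_def pj_def by simp
qed

lemma cprob_delta:
  assumes "pj \<Omega> W (\<lambda>w c. c) \<noteq> 0"
  shows "cprob (delta \<Omega> W) W F E = pj \<Omega> W (\<lambda>w c. c \<and> F w \<and> E w) / pj \<Omega> W (\<lambda>w c. c \<and> E w)"
proof -
  let ?K = "pj \<Omega> W (\<lambda>w c. c)"
  have delta_sum: "(\<Sum>w\<in>W. if G w then delta \<Omega> W w else 0) = (\<Sum>w\<in>W. if G w then \<Omega> w True else 0) / ?K"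
    for G
    unfolding delta_def sum_divide_distrib by (intro sum.cong refl) auto
  have pj_True: "pj \<Omega> W (\<lambda>w c. c \<and> G w) = (\<Sum>w\<in>W. if G w then \<Omega> w True else 0)" for G
    unfolding pj_def by (simp add: UNIV_bool)
  show ?thesis unfolding cprob_def delta_sum pj_True using assms by simp
qed

lemma ratio_of_sums_between_Min_Max:
  fixes q n r :: "'a \<Rightarrow> real"
  assumes "finite I" and "I \<noteq> {}" and "\<forall>i\<in>I. q i > 0" and "\<forall>i\<in>I. n i = r i * q i"
  shows "Min (r ` I) \<le> (\<Sum>i\<in>I. n i) / (\<Sum>i\<in>I. q i) \<and> (\<Sum>i\<in>I. n i) / (\<Sum>i\<in>I. q i) \<le> Max (r ` I)"
proof -
  have q_pos: "(\<Sum>i\<in>I. q i) > 0" using assms by (intro sum_pos) auto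
  have "(\<Sum>i\<in>I. n i) \<le> (\<Sum>i\<in>I. Max (r ` I) * q i)"
    using assms by (intro sum_mono) (auto intro!: mult_right_mono Max_ge less_imp_le)
  then have upper: "(\<Sum>i\<in>I. n i) \<le> Max (r ` I) * (\<Sum>i\<in>I. q i)"
    by (simp add: sum_distrib_left)
  have "(\<Sum>i\<in>I. Min (r ` I) * q i) \<le> (\<Sum>i\<in>I. n i)"
    using assms by (intro sum_mono) (auto intro!: mult_right_mono Min_le less_imp_le)
  then have lower: "Min (r ` I) * (\<Sum>i\<in>I. q i) \<le> (\<Sum>i\<in>I. n i)"
    by (simp add: sum_distrib_left)
  show ?thesis using upper lower q_pos by (simp add: pos_divide_le_eq pos_le_divide_eq)
qed

lemma cprob_tgt_between_strata:
  assumes "finite S" and "S \<noteq> {}" and "\<forall>w\<in>W. g w \<in> S"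
    and "\<forall>x\<in>S. pj \<Omega> W (\<lambda>w c. E w \<and> g w = x) > 0"
  shows "Min ((\<lambda>x. cprob (tgt \<Omega>) W F (\<lambda>w. E w \<and> g w = x)) ` S) \<le> cprob (tgt \<Omega>) W F E \<and>
         cprob (tgt \<Omega>) W F E \<le> Max ((\<lambda>x. cprob (tgt \<Omega>) W F (\<lambda>w. E w \<and> g w = x)) ` S)"
proof -
  define n where "n x = pj \<Omega> W (\<lambda>w c. F w \<and> E w \<and> g w = x)" for x
  define q where "q x = pj \<Omega> W (\<lambda>w c. E w \<and> g w = x)" for x
  define r where "r x = cprob (tgt \<Omega>) W F (\<lambda>w. E w \<and> g w = x)" for x
  have total: "cprob (tgt \<Omega>) W F E = (\<Sum>x\<in>S. n x) / (\<Sum>x\<in>S. q x)"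
    unfolding cprob_tgt n_def q_def
    using pj_eq_sum_strata[OF assms(1,3), of \<Omega> "\<lambda>w c. F w \<and> E w"]
          pj_eq_sum_strata[OF assms(1,3), of \<Omega> "\<lambda>w c. E w"]
    by (simp add: conj_assoc)
  have "Min (r ` S) \<le> (\<Sum>x\<in>S. n x) / (\<Sum>x\<in>S. q x) \<and> (\<Sum>x\<in>S. n x) / (\<Sum>x\<in>S. q x) \<le> Max (r ` S)"
    using assms(4) by (intro ratio_of_sums_between_Min_Max assms(1,2)) (auto simp: n_def q_def r_def cprob_tgt)
  then show ?thesis unfolding total r_def .
qed

lemma cond_indep_XC_classifier:
  fixes \<Omega> :: "('v \<Rightarrow> nat) \<Rightarrow> bool \<Rightarrow> real" and D :: "'v \<Rightarrow> nat set"
    and Sv :: 'v and s :: nat and A U :: "'v set" and a u :: "'v \<Rightarrow> nat"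
  defines "W \<equiv> Pi\<^sub>E UNIV D"
    and "Z \<equiv> \<lambda>w. w Sv = s \<and> restrict w A = a \<and> restrict w U = u"
  assumes ci: "cond_indep_XC \<Omega> D X Sv A U" and fin: "finite (Pi\<^sub>E X D)"
  shows "pj \<Omega> W (\<lambda>w c. c \<and> h (restrict w X) \<and> Z w) * pj \<Omega> W (\<lambda>w c. Z w)
       = pj \<Omega> W (\<lambda>w c. h (restrict w X) \<and> Z w) * pj \<Omega> W (\<lambda>w c. c \<and> Z w)"
proof -
  let ?H = "{x \<in> Pi\<^sub>E X D. h x}"
  have "finite ?H" using fin by simp
  have restrict_X: "\<forall>w\<in>W. restrict w X \<in> Pi\<^sub>E X D" unfolding W_def by auto
  have "pj \<Omega> W (\<lambda>w c'. restrict w X = x \<and> c' = True \<and> Z w) * pj \<Omega> W (\<lambda>w c'. Z w)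
      = pj \<Omega> W (\<lambda>w c'. restrict w X = x \<and> Z w) * pj \<Omega> W (\<lambda>w c'. c' = True \<and> Z w)" for x
    using ci unfolding cond_indep_XC_def Z_def W_def Let_def by blast
  then have "(\<Sum>x\<in>?H. pj \<Omega> W (\<lambda>w c'. restrict w X = x \<and> c' = True \<and> Z w)) * pj \<Omega> W (\<lambda>w c'. Z w)
      = (\<Sum>x\<in>?H. pj \<Omega> W (\<lambda>w c'. restrict w X = x \<and> Z w)) * pj \<Omega> W (\<lambda>w c'. c' = True \<and> Z w)"
    by (simp add: sum_distrib_right)
  then have "pj \<Omega> W (\<lambda>w c'. restrict w X \<in> ?H \<and> c' = True \<and> Z w) * pj \<Omega> W (\<lambda>w c'. Z w)
      = pj \<Omega> W (\<lambda>w c'. restrict w X \<in> ?H \<and> Z w) * pj \<Omega> W (\<lambda>w c'. c' = True \<and> Z w)"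
    by (simp only: sum_pj_eq_pj_mem[OF \<open>finite ?H\<close>])
  moreover have "pj \<Omega> W (\<lambda>w c'. restrict w X \<in> ?H \<and> c' = True \<and> Z w) = pj \<Omega> W (\<lambda>w c. c \<and> h (restrict w X) \<and> Z w)"
    and "pj \<Omega> W (\<lambda>w c'. restrict w X \<in> ?H \<and> Z w) = pj \<Omega> W (\<lambda>w c. h (restrict w X) \<and> Z w)"
    and "pj \<Omega> W (\<lambda>w c'. c' = True \<and> Z w) = pj \<Omega> W (\<lambda>w c. c \<and> Z w)"
    using restrict_X by (auto intro!: pj_cong)
  ultimately show ?thesis by metis
qed

lemma cprob_delta_eq_cprob_tgt_stratum:
  fixes \<Omega> :: "('v \<Rightarrow> nat) \<Rightarrow> bool \<Rightarrow> real" and D :: "'v \<Rightarrow> nat set"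
    and Sv :: 'v and s :: nat and A U :: "'v set" and a u :: "'v \<Rightarrow> nat"
  defines "W \<equiv> Pi\<^sub>E UNIV D"
    and "Z \<equiv> \<lambda>w. w Sv = s \<and> restrict w A = a \<and> restrict w U = u"
  assumes ci: "cond_indep_XC \<Omega> D X Sv A U" and fin: "finite (Pi\<^sub>E X D)"
    and nonneg: "\<forall>w c. 0 \<le> \<Omega> w c"
    and pos: "pj \<Omega> W (\<lambda>w c. Z w \<and> c) > 0"
  shows "cprob (delta \<Omega> W) W (\<lambda>w. h (restrict w X)) Z = cprob (tgt \<Omega>) W (\<lambda>w. h (restrict w X)) Z"
proof -
  have selected_pos: "pj \<Omega> W (\<lambda>w c. c \<and> Z w) > 0"
    using pos by (simp add: conj_commute)
  have "pj \<Omega> W (\<lambda>w c. c \<and> Z w) \<le> pj \<Omega> W (\<lambda>w c. c)"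
    using nonneg by (intro pj_mono) auto
  then have "pj \<Omega> W (\<lambda>w c. c) \<noteq> 0" using selected_pos by linarith
  moreover have "pj \<Omega> W (\<lambda>w c. c \<and> Z w) \<le> pj \<Omega> W (\<lambda>w c. Z w)"
    using nonneg by (intro pj_mono) auto
  ultimately have "pj \<Omega> W (\<lambda>w c. Z w) > 0" using selected_pos by linarith
  moreover have "pj \<Omega> W (\<lambda>w c. c \<and> h (restrict w X) \<and> Z w) * pj \<Omega> W (\<lambda>w c. Z w)
      = pj \<Omega> W (\<lambda>w c. h (restrict w X) \<and> Z w) * pj \<Omega> W (\<lambda>w c. c \<and> Z w)"
    using cond_indep_XC_classifier[OF ci fin, where h = h] unfolding W_def Z_def .
  ultimately show ?thesis
    unfolding cprob_delta[OF \<open>_ \<noteq> 0\<close>] cprob_tgt using selected_pos by (simp add: frac_eq_eq)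
qed

lemma cprob_tgt_between_delta_strata:
  fixes \<Omega> :: "('v \<Rightarrow> nat) \<Rightarrow> bool \<Rightarrow> real" and D :: "'v \<Rightarrow> nat set"
  defines "W \<equiv> Pi\<^sub>E UNIV D"
  assumes ci: "cond_indep_XC \<Omega> D X Sv A U" and fin_X: "finite (Pi\<^sub>E X D)"
    and fin_U: "finite (Pi\<^sub>E U D)" and ne_U: "Pi\<^sub>E U D \<noteq> {}"
    and nonneg: "\<forall>w c. 0 \<le> \<Omega> w c"
    and pos: "\<forall>u\<in>Pi\<^sub>E U D. pj \<Omega> W (\<lambda>w c. w Sv = s \<and> restrict w A = a \<and> restrict w U = u \<and> c) > 0"
  shows "Min ((\<lambda>u. cprob (delta \<Omega> W) W (\<lambda>w. h (restrict w X))
                 (\<lambda>w. w Sv = s \<and> restrict w A = a \<and> restrict w U = u)) ` Pi\<^sub>E U D)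
           \<le> cprob (tgt \<Omega>) W (\<lambda>w. h (restrict w X)) (\<lambda>w. w Sv = s \<and> restrict w A = a) \<and>
         cprob (tgt \<Omega>) W (\<lambda>w. h (restrict w X)) (\<lambda>w. w Sv = s \<and> restrict w A = a)
           \<le> Max ((\<lambda>u. cprob (delta \<Omega> W) W (\<lambda>w. h (restrict w X))
                 (\<lambda>w. w Sv = s \<and> restrict w A = a \<and> restrict w U = u)) ` Pi\<^sub>E U D)"
proof -
  have strata_eq: "(\<lambda>u. cprob (delta \<Omega> W) W (\<lambda>w. h (restrict w X))
                     (\<lambda>w. w Sv = s \<and> restrict w A = a \<and> restrict w U = u)) ` Pi\<^sub>E U D
      = (\<lambda>u. cprob (tgt \<Omega>) W (\<lambda>w. h (restrict w X))
                     (\<lambda>w. (w Sv = s \<and> restrict w A = a) \<and> restrict w U = u)) ` Pi\<^sub>E U D"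
    using pos unfolding W_def
    by (intro image_cong refl) (simp add: cprob_delta_eq_cprob_tgt_stratum[OF ci fin_X nonneg] conj_assoc)
  have "\<forall>u\<in>Pi\<^sub>E U D. pj \<Omega> W (\<lambda>w c. (w Sv = s \<and> restrict w A = a) \<and> restrict w U = u) > 0"
    using pos nonneg by (auto intro: less_le_trans pj_mono)
  then show ?thesis
    unfolding strata_eq by (intro cprob_tgt_between_strata fin_U ne_U) (auto simp: W_def)
qed

theorem proposition2:
  fixes D :: "'v::finite \<Rightarrow> nat set"
    and yv Sv :: 'v and s0 s1 :: nat
    and \<Omega> :: "('v \<Rightarrow> nat) \<Rightarrow> bool \<Rightarrow> real"
    and h :: "('v \<Rightarrow> nat) \<Rightarrow> bool"
    and A U :: "'v set"
  defines "X \<equiv> UNIV - {yv}"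
  defines "W \<equiv> Pi\<^sub>E UNIV D"
  defines "hh \<equiv> (\<lambda>w. h (restrict w X))"
  assumes dom_fin: "\<forall>v. finite (D v) \<and> D v \<noteq> {}"
    and dom_Y: "D yv = {0, 1}"
    and S_feat: "Sv \<in> X"
    and dom_S: "D Sv = {s0, s1}" and s_ne: "s0 \<noteq> s1"
    and A_adm: "Sv \<notin> A"
    and \<Omega>_nonneg: "\<forall>w c. 0 \<le> \<Omega> w c"
    and \<Omega>_supp: "\<forall>w c. w \<notin> W \<longrightarrow> \<Omega> w c = 0"
    and \<Omega>_sum: "pj \<Omega> W (\<lambda>w c. True) = 1"
    and mono_gap: "\<forall>a\<in>Pi\<^sub>E A D.
        cprob (tgt \<Omega>) W hh (\<lambda>w. w Sv = s1 \<and> restrict w A = a)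
        \<ge> cprob (tgt \<Omega>) W hh (\<lambda>w. w Sv = s0 \<and> restrict w A = a)"
    and ci: "cond_indep_XC \<Omega> D X Sv A U"
    and pos: "\<forall>s\<in>{s0, s1}. \<forall>a\<in>Pi\<^sub>E A D. \<forall>u\<in>Pi\<^sub>E U D.
        pj \<Omega> W (\<lambda>w c. w Sv = s \<and> restrict w A = a \<and> restrict w U = u \<and> c) > 0"
  shows "0 \<le> fq (tgt \<Omega>) D hh Sv s0 s1 A \<and>
         fq (tgt \<Omega>) D hh Sv s0 s1 A \<le>
         (1 / real (card (Pi\<^sub>E A D))) *
         (\<Sum>a\<in>Pi\<^sub>E A D.
            Max ((\<lambda>u. cprob (delta \<Omega> W) W hh
                   (\<lambda>w. w Sv = s1 \<and> restrict w A = a \<and> restrict w U = u)) ` Pi\<^sub>E U D)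
          - Min ((\<lambda>u. cprob (delta \<Omega> W) W hh
                   (\<lambda>w. w Sv = s0 \<and> restrict w A = a \<and> restrict w U = u)) ` Pi\<^sub>E U D))"
proof -
  let ?p = "\<lambda>s a. cprob (tgt \<Omega>) W hh (\<lambda>w. w Sv = s \<and> restrict w A = a)"
  let ?\<Delta>strata = "\<lambda>s a. (\<lambda>u. cprob (delta \<Omega> W) W hh
                   (\<lambda>w. w Sv = s \<and> restrict w A = a \<and> restrict w U = u)) ` Pi\<^sub>E U D"
  have fin_U: "finite (Pi\<^sub>E U D)" and ne_U: "Pi\<^sub>E U D \<noteq> {}" and fin_X: "finite (Pi\<^sub>E X D)"
    using dom_fin by (auto intro!: finite_PiE simp: PiE_eq_empty_iff)
  have bounds: "Min (?\<Delta>strata s a) \<le> ?p s a \<and> ?p s a \<le> Max (?\<Delta>strata s a)"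
    if "s \<in> {s0, s1}" and "a \<in> Pi\<^sub>E A D" for s a
    unfolding W_def hh_def
    by (rule cprob_tgt_between_delta_strata[OF ci fin_X fin_U ne_U \<Omega>_nonneg])
      (use pos that in \<open>auto simp: W_def\<close>)
  have "\<bar>?p s1 a - ?p s0 a\<bar> \<le> Max (?\<Delta>strata s1 a) - Min (?\<Delta>strata s0 a)" if "a \<in> Pi\<^sub>E A D" for a
    using bounds[of s1 a] bounds[of s0 a] mono_gap that by fastforce
  then have "(\<Sum>a\<in>Pi\<^sub>E A D. \<bar>?p s1 a - ?p s0 a\<bar>) \<le> (\<Sum>a\<in>Pi\<^sub>E A D. Max (?\<Delta>strata s1 a) - Min (?\<Delta>strata s0 a))"
    by (rule sum_mono)
  then show ?thesis
    unfolding fq_def W_def[symmetric] by (auto intro!: sum_nonneg divide_right_mono)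
qed

end
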